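(* Let $S$ be a closed connected oriented surface of genus $n\ge2$ and let $\chi\in H^1(S,\mathbb C)$ satisfy $\chi(H_1(S,\mathbb Z))=\mathbb Z+i\mathbb Z$ and $\omega(\chi)>0$. Then there is a symplectic basis $x_1,y_1,\dots,x_n,y_n$ of $H_1(S,\mathbb Z)$ such that $\chi(x_1)=\omega(\chi)$, $\chi(y_1)=i$, and for every $j=2,\dots,n$: $\chi(y_j)=0$ and $\chi(x_j)=a_j$ with $a_j$ an integer satisfying $0\le a_j<\omega(\chi)$.
   Context: A symplectic basis of $H_1(S,\mathbb Z)$ is a basis with intersection numbers $x_i\cdot y_j=\delta_{ij}$, $x_i\cdot x_j=y_i\cdot y_j=0$. $\omega(\chi):=\sum_{j=1}^n\mathrm{Im}(\overline{\chi(x_j)}\chi(y_j))$ for any symplectic basis (independent of the choice). *)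

theory Defs
  imports Complex_Main
begin

text \<open>Model of H_1(S,Z) for a closed oriented surface of genus n: the lattice Z^(2n),
  realised as integer sequences supported on indices below 2n.  Index 2j is the
  standard class a_(j+1), index 2j+1 the standard class b_(j+1) of a fixed standard
  symplectic basis (0-indexed j < n).\<close>

definition H1 :: "nat \<Rightarrow> (nat \<Rightarrow> int) set" where
  "H1 n = {v. \<forall>k\<ge>2*n. v k = 0}"

definition inter :: "nat \<Rightarrow> (nat \<Rightarrow> int) \<Rightarrow> (nat \<Rightarrow> int) \<Rightarrow> int" where
  "inter n v w = (\<Sum>j<n. v (2*j) * w (2*j+1) - v (2*j+1) * w (2*j))"

definition std_x :: "nat \<Rightarrow> nat \<Rightarrow> int" where
  "std_x j = (\<lambda>k. if k = 2*j then 1 else 0)"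
definition std_y :: "nat \<Rightarrow> nat \<Rightarrow> int" where
  "std_y j = (\<lambda>k. if k = 2*j+1 then 1 else 0)"

text \<open>An element of H^1(S,C) = Hom(H_1(S,Z), C): an additive map on H1 n.\<close>
definition is_char :: "nat \<Rightarrow> ((nat \<Rightarrow> int) \<Rightarrow> complex) \<Rightarrow> bool" where
  "is_char n chi \<longleftrightarrow> (\<forall>v\<in>H1 n. \<forall>w\<in>H1 n. chi (\<lambda>k. v k + w k) = chi v + chi w)"

definition symplectic_basis ::
  "nat \<Rightarrow> (nat \<Rightarrow> nat \<Rightarrow> int) \<Rightarrow> (nat \<Rightarrow> nat \<Rightarrow> int) \<Rightarrow> bool" where
  "symplectic_basis n x y \<longleftrightarrow>
     (\<forall>j<n. x j \<in> H1 n \<and> y j \<in> H1 n) \<and>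
     (\<forall>i<n. \<forall>j<n. inter n (x i) (y j) = (if i = j then 1 else 0)
                 \<and> inter n (x i) (x j) = 0 \<and> inter n (y i) (y j) = 0) \<and>
     (\<forall>v\<in>H1 n. \<exists>a b :: nat \<Rightarrow> int.
        v = (\<lambda>k. \<Sum>j<n. a j * x j k + b j * y j k)) \<and>
     (\<forall>a b :: nat \<Rightarrow> int. (\<lambda>k. \<Sum>j<n. a j * x j k + b j * y j k) = (\<lambda>k. 0)
        \<longrightarrow> (\<forall>j<n. a j = 0 \<and> b j = 0))"

text \<open>omega(chi), computed in the standard symplectic basis (the value is independent
  of the choice of symplectic basis).\<close>
definition omega :: "nat \<Rightarrow> ((nat \<Rightarrow> int) \<Rightarrow> complex) \<Rightarrow> real" where
  "omega n chi = (\<Sum>j<n. Im (cnj (chi (std_x j)) * chi (std_y j)))"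

end

theory Submission
  imports Defs
begin

text \<open>Indices are 0-based, so the paper's \<open>x\<^sub>1, y\<^sub>1, x\<^sub>2\<close> are \<open>x 0, y 0, x 1\<close> here.
  All changes of basis are symplectic transvections \<open>v \<mapsto> v + c\<langle>v,u\<rangle>u\<close>. They map symplectic
  bases to symplectic bases, act on the values \<open>p\<^sub>j = \<chi>(x\<^sub>j)\<close>, \<open>q\<^sub>j = \<chi>(y\<^sub>j)\<close> by integral
  column operations, and preserve \<open>\<Sum> Im(conj p\<^sub>j q\<^sub>j)\<close>. A Euclidean algorithm, first on imaginary
  and then on real parts, makes all values vanish except \<open>p\<^sub>0, q\<^sub>0, p\<^sub>1\<close>, with \<open>Im q\<^sub>0 = 1\<close> and
  \<open>p\<^sub>0, p\<^sub>1\<close> real. Surjectivity of \<open>\<chi>\<close> onto \<open>\<int>[i]\<close> then gives \<open>gcd(p\<^sub>0, p\<^sub>1) = 1\<close>, which allows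
  \<open>q\<^sub>0 = i\<close>; now \<open>\<omega>(\<chi>) = p\<^sub>0\<close>, and a last shear reduces \<open>p\<^sub>1\<close> modulo \<open>p\<^sub>0\<close>.\<close>

definition combination ::
  "nat \<Rightarrow> (nat \<Rightarrow> nat \<Rightarrow> int) \<Rightarrow> (nat \<Rightarrow> nat \<Rightarrow> int) \<Rightarrow> (nat \<Rightarrow> int) \<Rightarrow> (nat \<Rightarrow> int) \<Rightarrow> nat \<Rightarrow> int"
  where "combination m x y a b = (\<lambda>k. \<Sum>j<m. a j * x j k + b j * y j k)"

definition symplectic_system :: "nat \<Rightarrow> (nat \<Rightarrow> nat \<Rightarrow> int) \<Rightarrow> (nat \<Rightarrow> nat \<Rightarrow> int) \<Rightarrow> bool" where
  "symplectic_system n x y \<longleftrightarrow>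
     (\<forall>j<n. x j \<in> H1 n \<and> y j \<in> H1 n) \<and>
     (\<forall>i<n. \<forall>j<n. inter n (x i) (y j) = (if i = j then 1 else 0)
                 \<and> inter n (x i) (x j) = 0 \<and> inter n (y i) (y j) = 0)"

lemma inter_add_scaled_left: "inter n (\<lambda>k. v k + c * w k) u = inter n v u + c * inter n w u"
  unfolding inter_def by (simp add: algebra_simps sum.distrib sum_subtractf sum_distrib_left)

lemma inter_add_scaled_right: "inter n u (\<lambda>k. v k + c * w k) = inter n u v + c * inter n u w"
  unfolding inter_def by (simp add: algebra_simps sum.distrib sum_subtractf sum_distrib_left)

lemma inter_self: "inter n v v = 0"
  unfolding inter_def by (simp add: mult.commute)

lemma inter_swap: "inter n w v = - inter n v w"
  unfolding inter_def by (simp add: sum_negf[symmetric] algebra_simps)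

lemma inter_zero_left: "inter n (\<lambda>k. 0) u = 0"
  by (simp add: inter_def)

lemma inter_combination:
  "inter n (combination m x y a b) u = (\<Sum>j<m. a j * inter n (x j) u + b j * inter n (y j) u)"
  unfolding inter_def combination_def
  by (simp add: sum_distrib_right sum_distrib_left sum_subtractf[symmetric]
      sum.distrib[symmetric] algebra_simps sum.swap[of _ "{..<m}"])

lemma combination_in_H1:
  "(\<And>j. j < m \<Longrightarrow> x j \<in> H1 n \<and> y j \<in> H1 n) \<Longrightarrow> combination m x y a b \<in> H1 n"
  by (simp add: H1_def combination_def)

lemma inter_combination_system:
  assumes "symplectic_system n x y" "k < n"
  shows "inter n (combination n x y a b) (y k) = a k"
    and "inter n (combination n x y a b) (x k) = - b k"
proof -
  have table: "inter n (x j) (y k) = of_bool (j = k)" "inter n (y j) (y k) = 0"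
    "inter n (x j) (x k) = 0" "inter n (y j) (x k) = - of_bool (j = k)" if "j < n" for j
    using assms that inter_swap[of n "y j" "x k"] unfolding symplectic_system_def by auto
  have "(\<Sum>j<n. a j * inter n (x j) (y k) + b j * inter n (y j) (y k))
      = (\<Sum>j<n. if j = k then a k else 0)"
    by (rule sum.cong) (auto simp: table)
  then show "inter n (combination n x y a b) (y k) = a k"
    using assms(2) by (simp add: inter_combination)
  have "(\<Sum>j<n. a j * inter n (x j) (x k) + b j * inter n (y j) (x k))
      = (\<Sum>j<n. if j = k then - b k else 0)"
    by (rule sum.cong) (auto simp: table)
  then show "inter n (combination n x y a b) (x k) = - b k"
    using assms(2) by (simp add: inter_combination)
qed

lemma symplectic_basis_iff:
  "symplectic_basis n x y \<longleftrightarrow>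
     symplectic_system n x y \<and> (\<forall>v\<in>H1 n. \<exists>a b. v = combination n x y a b)"
proof -
  have independent: "a j = 0 \<and> b j = 0"
    if "symplectic_system n x y" "combination n x y a b = (\<lambda>k. 0)" "j < n" for a b j
    using inter_combination_system[OF that(1,3), of a b] that(2) by (simp add: inter_zero_left)
  show ?thesis
  proof
    assume "symplectic_basis n x y"
    then show "symplectic_system n x y \<and> (\<forall>v\<in>H1 n. \<exists>a b. v = combination n x y a b)"
      unfolding symplectic_basis_def symplectic_system_def combination_def by blast
  next
    assume "symplectic_system n x y \<and> (\<forall>v\<in>H1 n. \<exists>a b. v = combination n x y a b)"
    with independent show "symplectic_basis n x y"
      unfolding symplectic_basis_def symplectic_system_def combination_def by blast
  qed
qed

definition transvection :: "nat \<Rightarrow> int \<Rightarrow> (nat \<Rightarrow> int) \<Rightarrow> (nat \<Rightarrow> int) \<Rightarrow> nat \<Rightarrow> int" where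
  "transvection n c u v = (\<lambda>k. v k + c * inter n v u * u k)"

lemma transvection_in_H1: "v \<in> H1 n \<Longrightarrow> u \<in> H1 n \<Longrightarrow> transvection n c u v \<in> H1 n"
  by (simp add: H1_def transvection_def)

lemma inter_transvection_axis: "inter n (transvection n c u v) u = inter n v u"
  by (simp add: transvection_def inter_add_scaled_left inter_self)

lemma inter_transvection:
  "inter n (transvection n c u v) (transvection n c u w) = inter n v w"
  unfolding transvection_def
  by (simp only: inter_add_scaled_left inter_add_scaled_right)
    (simp add: inter_self inter_swap[of n u w] algebra_simps)

lemma transvection_inverse: "transvection n c u (transvection n (- c) u v) = v"
  unfolding transvection_def[of n c] inter_transvection_axis by (simp add: transvection_def)

lemma transvection_combination:
  "transvection n c u (combination m x y a b)
     = combination m (\<lambda>j. transvection n c u (x j)) (\<lambda>j. transvection n c u (y j)) a b"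
  unfolding transvection_def inter_combination
  by (simp add: combination_def fun_eq_iff sum.distrib sum_distrib_left sum_distrib_right
      algebra_simps)

lemma symplectic_basis_transvection:
  assumes "symplectic_basis n x y" "u \<in> H1 n"
  shows "symplectic_basis n (\<lambda>j. transvection n c u (x j)) (\<lambda>j. transvection n c u (y j))"
  unfolding symplectic_basis_iff
proof
  show "symplectic_system n (\<lambda>j. transvection n c u (x j)) (\<lambda>j. transvection n c u (y j))"
    using assms unfolding symplectic_basis_iff symplectic_system_def
    by (simp add: transvection_in_H1 inter_transvection)
  show "\<forall>v\<in>H1 n. \<exists>a b. v = combination n (\<lambda>j. transvection n c u (x j))
                                           (\<lambda>j. transvection n c u (y j)) a b"
  proof
    fix v assume "v \<in> H1 n"
    then obtain a b where "transvection n (- c) u v = combination n x y a b"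
      using assms transvection_in_H1 unfolding symplectic_basis_iff by meson
    then have "v = transvection n c u (combination n x y a b)"
      by (metis transvection_inverse)
    then show "\<exists>a b. v = combination n (\<lambda>j. transvection n c u (x j))
                                         (\<lambda>j. transvection n c u (y j)) a b"
      by (auto simp: transvection_combination)
  qed
qed

lemma inter_std_x: "i < n \<Longrightarrow> inter n (std_x i) w = w (2*i+1)"
proof -
  assume "i < n"
  moreover have "inter n (std_x i) w = (\<Sum>l<n. if l = i then w (2*i+1) else 0)"
    unfolding inter_def by (rule sum.cong) (auto simp: std_x_def)
  ultimately show ?thesis by simp
qed

lemma inter_std_y: "i < n \<Longrightarrow> inter n (std_y i) w = - w (2*i)"
proof -
  assume "i < n"
  moreover have "inter n (std_y i) w = (\<Sum>l<n. if l = i then - w (2*i) else 0)"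
    unfolding inter_def by (rule sum.cong) (auto simp: std_y_def)
  ultimately show ?thesis by simp
qed

lemma H1_eq_combination_std:
  assumes "v \<in> H1 n"
  shows "v = combination n std_x std_y (\<lambda>j. v (2*j)) (\<lambda>j. v (2*j+1))"
proof
  fix k
  show "v k = combination n std_x std_y (\<lambda>j. v (2*j)) (\<lambda>j. v (2*j+1)) k"
  proof (cases "k < 2*n")
    case True
    have "combination n std_x std_y (\<lambda>j. v (2*j)) (\<lambda>j. v (2*j+1)) k
        = (\<Sum>j<n. if j = k div 2 then v k else 0)"
      unfolding combination_def by (rule sum.cong) (auto simp: std_x_def std_y_def)
    also have "\<dots> = v k" using True by (simp add: div_less_iff_less_mult)
    finally show ?thesis by simp
  next
    case False
    then show ?thesis
      using assms by (auto simp: H1_def combination_def std_x_def std_y_def intro!: sum.neutral)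
  qed
qed

lemma symplectic_basis_std: "symplectic_basis n std_x std_y"
  unfolding symplectic_basis_iff symplectic_system_def
  using H1_eq_combination_std
  by (auto simp: inter_std_x inter_std_y H1_def) (auto simp: std_x_def std_y_def)

lemma area_transvection:
  fixes p q :: "nat \<Rightarrow> complex" and a b :: "nat \<Rightarrow> int"
  assumes "z = (\<Sum>j\<in>A. of_int (a j) * p j + of_int (b j) * q j)"
  shows "(\<Sum>j\<in>A. Im (cnj (p j + of_int (c * b j) * z) * (q j - of_int (c * a j) * z)))
       = (\<Sum>j\<in>A. Im (cnj (p j) * q j))"
proof -
  have Re_z: "Re z = (\<Sum>j\<in>A. of_int (a j) * Re (p j) + of_int (b j) * Re (q j))"
   and Im_z: "Im z = (\<Sum>j\<in>A. of_int (a j) * Im (p j) + of_int (b j) * Im (q j))"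
    using assms by simp_all
  have "(\<Sum>j\<in>A. Im (cnj (p j + of_int (c * b j) * z) * (q j - of_int (c * a j) * z)))
      = (\<Sum>j\<in>A. Im (cnj (p j) * q j))
        + of_int c * (Re z * (\<Sum>j\<in>A. of_int (a j) * Im (p j) + of_int (b j) * Im (q j))
                    - Im z * (\<Sum>j\<in>A. of_int (a j) * Re (p j) + of_int (b j) * Re (q j)))"
    by (simp add: sum.distrib sum_subtractf sum_distrib_left algebra_simps)
  then show ?thesis by (simp add: Re_z Im_z)
qed

lemma euclidean_reduction:
  fixes S :: "(int \<times> int) set"
  assumes "(a, b) \<in> S"
    and add_left: "\<And>a b c. (a, b) \<in> S \<Longrightarrow> (a + c * b, b) \<in> S"
    and add_right: "\<And>a b c. (a, b) \<in> S \<Longrightarrow> (a, b + c * a) \<in> S"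
  shows "\<exists>a'. (a', 0) \<in> S"
  using assms(1)
proof (induction "nat \<bar>b\<bar>" arbitrary: a b rule: less_induct)
  case less
  show ?case
  proof (cases "b = 0")
    case True
    with less.prems show ?thesis by blast
  next
    case False
    have reduced: "(a mod b, b) \<in> S"
      using add_left[OF less.prems, of "- (a div b)"] by (simp add: minus_div_mult_eq_mod)
    show ?thesis
    proof (cases "a mod b = 0")
      case True
      then have "(b, b) \<in> S" using add_left[OF reduced, of 1] by simp
      from add_right[OF this, of "- 1"] show ?thesis by auto
    next
      case False
      have "\<bar>b mod (a mod b)\<bar> < \<bar>b\<bar>"
        using abs_mod_less[OF False] abs_mod_less[OF \<open>b \<noteq> 0\<close>] by (meson order.strict_trans)
      then have "nat \<bar>b mod (a mod b)\<bar> < nat \<bar>b\<bar>" by (simp add: nat_less_eq_zless)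
      moreover have "(a mod b, b mod (a mod b)) \<in> S"
        using add_right[OF reduced, of "- (b div (a mod b))"] by (simp add: minus_div_mult_eq_mod)
      ultimately show ?thesis using less.hyps by blast
    qed
  qed
qed

lemma sum_of_int_delta:
  fixes f :: "nat \<Rightarrow> 'a :: comm_ring_1"
  assumes "j < n"
  shows "(\<Sum>k<n. of_int (if k = j then 1 else 0) * f k) = f j"
proof -
  have "(\<Sum>k<n. of_int (if k = j then 1 else 0) * f k) = (\<Sum>k<n. if k = j then f k else 0)"
    by (rule sum.cong) auto
  with assms show ?thesis by simp
qed

lemma sum_lessThan_two:
  fixes f :: "nat \<Rightarrow> 'a :: comm_monoid_add"
  assumes "2 \<le> n" "\<forall>j\<in>{2..<n}. f j = 0"
  shows "(\<Sum>j<n. f j) = f 0 + f 1"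
proof -
  have "(\<Sum>j<n. f j) = (\<Sum>j<n. (if j = 0 then f 0 else 0) + (if j = 1 then f 1 else 0))"
    by (rule sum.cong) (use assms(2) in auto)
  with assms(1) show ?thesis by (simp add: sum.distrib)
qed

lemma Gaussian_integer_real_eq_of_int:
  "Re z \<in> \<int> \<Longrightarrow> Im z = 0 \<Longrightarrow> \<exists>m. z = of_int m"
  by (auto simp: complex_eq_iff elim!: Ints_cases)

locale integral_character =
  fixes n :: nat and chi :: "(nat \<Rightarrow> int) \<Rightarrow> complex"
  assumes additive: "is_char n chi"
    and image: "chi ` H1 n = {of_int a + \<i> * of_int b | a b :: int. True}"
begin

lemma chi_add: "v \<in> H1 n \<Longrightarrow> w \<in> H1 n \<Longrightarrow> chi (\<lambda>k. v k + w k) = chi v + chi w"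
  using additive unfolding is_char_def by blast

lemma chi_scaled: "w \<in> H1 n \<Longrightarrow> chi (\<lambda>k. c * w k) = of_int c * chi w"
proof (induction c rule: int_induct[where k = 0])
  case base
  have "(\<lambda>k. 0) \<in> H1 n" by (simp add: H1_def)
  from chi_add[OF this this] show ?case by simp
next
  case (step1 c)
  have "chi (\<lambda>k. (c + 1) * w k) = chi (\<lambda>k. c * w k + w k)" by (simp add: algebra_simps)
  also have "\<dots> = chi (\<lambda>k. c * w k) + chi w" using step1 by (simp add: chi_add H1_def)
  finally show ?case using step1 by (simp add: algebra_simps)
next
  case (step2 c)
  have "chi (\<lambda>k. c * w k) = chi (\<lambda>k. (c - 1) * w k + w k)" by (simp add: algebra_simps)
  also have "\<dots> = chi (\<lambda>k. (c - 1) * w k) + chi w" using step2 by (simp add: chi_add H1_def)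
  finally show ?case using step2 by (simp add: algebra_simps)
qed

lemma chi_add_scaled:
  "v \<in> H1 n \<Longrightarrow> w \<in> H1 n \<Longrightarrow> chi (\<lambda>k. v k + c * w k) = chi v + of_int c * chi w"
  using chi_add[of v "\<lambda>k. c * w k"] chi_scaled by (simp add: H1_def)

lemma chi_combination:
  assumes "\<And>j. j < m \<Longrightarrow> x j \<in> H1 n \<and> y j \<in> H1 n"
  shows "chi (combination m x y a b) = (\<Sum>j<m. of_int (a j) * chi (x j) + of_int (b j) * chi (y j))"
  using assms
proof (induction m)
  case 0
  have "(\<lambda>k. 0) \<in> H1 n" by (simp add: H1_def)
  from chi_add[OF this this] show ?case by (simp add: combination_def)
next
  case (Suc m)
  have "combination (Suc m) x y a b
      = (\<lambda>k. (\<lambda>k. combination m x y a b k + a m * x m k) k + b m * y m k)"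
    by (simp add: combination_def fun_eq_iff add.assoc)
  moreover have "combination m x y a b \<in> H1 n" using Suc.prems by (simp add: combination_in_H1)
  ultimately show ?case using Suc by (simp add: chi_add_scaled H1_def)
qed

lemma chi_Gaussian_integer:
  assumes "v \<in> H1 n" shows "Re (chi v) \<in> \<int> \<and> Im (chi v) \<in> \<int>"
proof -
  obtain a b :: int where "chi v = of_int a + \<i> * of_int b"
    using assms image by blast
  then show ?thesis by simp
qed

lemma Gaussian_integer_in_image: "Re z \<in> \<int> \<Longrightarrow> Im z \<in> \<int> \<Longrightarrow> z \<in> chi ` H1 n"
  unfolding image by (auto simp: complex_eq_iff elim!: Ints_cases)

text \<open>The symplectic area is part of the definition: it is only shown to be invariant under the
  moves below, not for arbitrary symplectic bases.\<close>
definition realizable :: "(nat \<Rightarrow> complex) \<Rightarrow> (nat \<Rightarrow> complex) \<Rightarrow> bool" where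
  "realizable p q \<longleftrightarrow>
     (\<exists>x y. symplectic_basis n x y \<and> (\<forall>j<n. chi (x j) = p j \<and> chi (y j) = q j)) \<and>
     (\<Sum>j<n. Im (cnj (p j) * q j)) = omega n chi"

lemma realizable_std: "realizable (\<lambda>j. chi (std_x j)) (\<lambda>j. chi (std_y j))"
  unfolding realizable_def omega_def using symplectic_basis_std by blast

lemma realizable_Gaussian_integer:
  assumes "realizable p q" "k < n"
  shows "Re (p k) \<in> \<int>" "Im (p k) \<in> \<int>" "Re (q k) \<in> \<int>" "Im (q k) \<in> \<int>"
  using assms chi_Gaussian_integer unfolding realizable_def symplectic_basis_def by metis+

lemma realizable_represents:
  assumes "realizable p q" "z \<in> chi ` H1 n"
  shows "\<exists>a b. z = (\<Sum>j<n. of_int (a j) * p j + of_int (b j) * q j)"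
proof -
  obtain x y where basis: "symplectic_basis n x y" and val: "\<forall>j<n. chi (x j) = p j \<and> chi (y j) = q j"
    using assms(1) unfolding realizable_def by blast
  obtain v where "v \<in> H1 n" "z = chi v" using assms(2) by blast
  moreover obtain a b where "v = combination n x y a b"
    using basis \<open>v \<in> H1 n\<close> unfolding symplectic_basis_iff by blast
  ultimately have "z = chi (combination n x y a b)" by simp
  also have "\<dots> = (\<Sum>j<n. of_int (a j) * p j + of_int (b j) * q j)"
    using basis val by (simp add: chi_combination symplectic_basis_def)
  finally show ?thesis by blast
qed

lemma realizable_transvection:
  fixes a b :: "nat \<Rightarrow> int"
  assumes "realizable p q"
  defines "z \<equiv> \<Sum>j<n. of_int (a j) * p j + of_int (b j) * q j"
  shows "realizable (\<lambda>k. p k + of_int (c * b k) * z) (\<lambda>k. q k - of_int (c * a k) * z)"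
proof -
  obtain x y where basis: "symplectic_basis n x y" and val: "\<forall>j<n. chi (x j) = p j \<and> chi (y j) = q j"
    using assms(1) unfolding realizable_def by blast
  define u where "u = combination n x y a b"
  have H1: "\<And>j. j < n \<Longrightarrow> x j \<in> H1 n \<and> y j \<in> H1 n"
    using basis by (simp add: symplectic_basis_def)
  have u: "u \<in> H1 n" "chi u = z"
    using H1 val by (simp_all add: u_def combination_in_H1 chi_combination z_def)
  have system: "symplectic_system n x y" using basis by (simp add: symplectic_basis_iff)
  have inter_u: "inter n (x k) u = b k" "inter n (y k) u = - a k" if "k < n" for k
    using inter_combination_system[OF system that, of a b, folded u_def]
      inter_swap[of n "x k" u] inter_swap[of n "y k" u] by simp_all
  have "chi (transvection n c u (x k)) = p k + of_int (c * b k) * z"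
       "chi (transvection n c u (y k)) = q k - of_int (c * a k) * z" if "k < n" for k
  proof -
    have "transvection n c u (x k) = (\<lambda>l. x k l + (c * b k) * u l)"
         "transvection n c u (y k) = (\<lambda>l. y k l + (- (c * a k)) * u l)"
      using inter_u[OF that] by (simp_all add: transvection_def)
    then show "chi (transvection n c u (x k)) = p k + of_int (c * b k) * z"
              "chi (transvection n c u (y k)) = q k - of_int (c * a k) * z"
      using that val H1 u chi_add_scaled[of "y k" u "- (c * a k)"] by (simp_all add: chi_add_scaled)
  qed
  then show ?thesis
    using symplectic_basis_transvection[OF basis u(1), of c] assms(1)
      area_transvection[OF z_def[THEN meta_eq_to_obj_eq], of c]
    unfolding realizable_def by auto
qed

lemma realizable_add_y_to_x:
  assumes "realizable p q" "j < n"
  shows "realizable (p(j := p j + of_int c * q j)) q"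
proof -
  have "realizable (\<lambda>k. p k + of_int (c * (if k = j then 1 else 0)) * q j) (\<lambda>k. q k - 0)"
    using realizable_transvection[OF assms(1), where a = "\<lambda>_. 0"
        and b = "\<lambda>k. if k = j then 1 else 0" and c = c]
    by (simp add: sum_of_int_delta[OF assms(2)])
  moreover have "(\<lambda>k. p k + of_int (c * (if k = j then 1 else 0)) * q j) = p(j := p j + of_int c * q j)"
    by (simp add: fun_eq_iff)
  ultimately show ?thesis by simp
qed

lemma realizable_add_x_to_y:
  assumes "realizable p q" "j < n"
  shows "realizable p (q(j := q j + of_int c * p j))"
proof -
  have "realizable (\<lambda>k. p k + 0) (\<lambda>k. q k - of_int (- c * (if k = j then 1 else 0)) * p j)"
    using realizable_transvection[OF assms(1), where a = "\<lambda>k. if k = j then 1 else 0"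
        and b = "\<lambda>_. 0" and c = "- c"]
    by (simp add: sum_of_int_delta[OF assms(2)])
  moreover have "(\<lambda>k. q k - of_int (- c * (if k = j then 1 else 0)) * p j) = q(j := q j + of_int c * p j)"
    by (simp add: fun_eq_iff)
  ultimately show ?thesis by simp
qed

lemma realizable_shear:
  assumes "realizable p q" "i < n" "j < n" "i \<noteq> j"
  shows "realizable (p(i := p i + of_int c * p j)) (q(j := q j - of_int c * q i))"
proof -
  txt \<open>The shear is the product of the transvections along \<open>x\<^sub>j + y\<^sub>i\<close>, \<open>y\<^sub>i\<close> and \<open>x\<^sub>j\<close>.\<close>
  define z where "z = p j + q i"
  have "realizable (\<lambda>k. p k + of_int (c * (if k = i then 1 else 0)) * z)
                    (\<lambda>k. q k - of_int (c * (if k = j then 1 else 0)) * z)"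
    using realizable_transvection[OF assms(1), where a = "\<lambda>k. if k = j then 1 else 0"
        and b = "\<lambda>k. if k = i then 1 else 0" and c = c]
    by (simp add: sum.distrib sum_of_int_delta assms(2,3) z_def)
  moreover have "(\<lambda>k. p k + of_int (c * (if k = i then 1 else 0)) * z) = p(i := p i + of_int c * z)"
    "(\<lambda>k. q k - of_int (c * (if k = j then 1 else 0)) * z) = q(j := q j - of_int c * z)"
    by (simp_all add: fun_eq_iff)
  ultimately have "realizable (p(i := p i + of_int c * z)) (q(j := q j - of_int c * z))"
    by simp
  from realizable_add_x_to_y[OF realizable_add_y_to_x[OF this assms(2), of "- c"] assms(3), of c]
  show ?thesis
    using assms(4) by (simp add: z_def algebra_simps)
qed

lemma realizable_reduce_y:
  assumes "realizable p q" "k < n" "R p q" "\<phi> = Re \<or> \<phi> = Im"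
    and add_y: "\<And>p q c. R p q \<Longrightarrow> R (p(k := p k + of_int c * q k)) q"
    and add_x: "\<And>p q c. R p q \<Longrightarrow> R p (q(k := q k + of_int c * p k))"
  shows "\<exists>p q. realizable p q \<and> R p q \<and> \<phi> (q k) = 0"
proof -
  define S where "S = {(a, b). \<exists>p q. realizable p q \<and> R p q \<and> \<phi> (p k) = of_int a \<and> \<phi> (q k) = of_int b}"
  have linear: "\<phi> (z + of_int c * w) = \<phi> z + of_int c * \<phi> w" for z w c
    using assms(4) by auto
  have "\<phi> (p k) \<in> \<int>" "\<phi> (q k) \<in> \<int>"
    using realizable_Gaussian_integer[OF assms(1,2)] assms(4) by auto
  then obtain a b where "(a, b) \<in> S"
    using assms(1,3) unfolding S_def by (auto elim!: Ints_cases)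
  then have "\<exists>a'. (a', 0) \<in> S"
  proof (rule euclidean_reduction)
    fix a b c assume "(a, b) \<in> S"
    then obtain p q where pq: "realizable p q" "R p q" "\<phi> (p k) = of_int a" "\<phi> (q k) = of_int b"
      unfolding S_def by blast
    show "(a + c * b, b) \<in> S"
      unfolding S_def mem_Collect_eq prod.case
      by (rule exI[of _ "p(k := p k + of_int c * q k)"], rule exI[of _ q])
        (use pq realizable_add_y_to_x[OF pq(1) assms(2)] add_y linear in auto)
    show "(a, b + c * a) \<in> S"
      unfolding S_def mem_Collect_eq prod.case
      by (rule exI[of _ p], rule exI[of _ "q(k := q k + of_int c * p k)"])
        (use pq realizable_add_x_to_y[OF pq(1) assms(2)] add_x linear in auto)
  qed
  then show ?thesis unfolding S_def by auto
qed

lemma realizable_reduce_x: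
  assumes "realizable p q" "i < n" "k < n" "i \<noteq> k" "R p q" "\<phi> = Re \<or> \<phi> = Im"
    and shear_ik: "\<And>p q c. R p q \<Longrightarrow> R (p(i := p i + of_int c * p k)) (q(k := q k - of_int c * q i))"
    and shear_ki: "\<And>p q c. R p q \<Longrightarrow> R (p(k := p k + of_int c * p i)) (q(i := q i - of_int c * q k))"
  shows "\<exists>p q. realizable p q \<and> R p q \<and> \<phi> (p k) = 0"
proof -
  define S where "S = {(a, b). \<exists>p q. realizable p q \<and> R p q \<and> \<phi> (p i) = of_int a \<and> \<phi> (p k) = of_int b}"
  have linear: "\<phi> (z + of_int c * w) = \<phi> z + of_int c * \<phi> w" for z w c
    using assms(6) by auto
  have "\<phi> (p i) \<in> \<int>" "\<phi> (p k) \<in> \<int>"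
    using realizable_Gaussian_integer[OF assms(1,2)] realizable_Gaussian_integer[OF assms(1,3)]
      assms(6) by auto
  then obtain a b where "(a, b) \<in> S"
    using assms(1,5) unfolding S_def by (auto elim!: Ints_cases)
  then have "\<exists>a'. (a', 0) \<in> S"
  proof (rule euclidean_reduction)
    fix a b c assume "(a, b) \<in> S"
    then obtain p q where pq: "realizable p q" "R p q" "\<phi> (p i) = of_int a" "\<phi> (p k) = of_int b"
      unfolding S_def by blast
    show "(a + c * b, b) \<in> S"
      unfolding S_def mem_Collect_eq prod.case
      by (rule exI[of _ "p(i := p i + of_int c * p k)"], rule exI[of _ "q(k := q k - of_int c * q i)"])
        (use pq realizable_shear[OF pq(1) assms(2,3,4)] shear_ik linear assms(4) in auto)
    show "(a, b + c * a) \<in> S"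
      unfolding S_def mem_Collect_eq prod.case
      by (rule exI[of _ "p(k := p k + of_int c * p i)"], rule exI[of _ "q(i := q i - of_int c * q k)"])
        (use pq realizable_shear[OF pq(1) assms(3,2) assms(4)[symmetric]] shear_ki linear assms(4)
          in auto)
  qed
  then show ?thesis unfolding S_def by auto
qed

lemma exists_realizable_real_y: "\<exists>p q. realizable p q \<and> (\<forall>k<n. Im (q k) = 0)"
proof -
  have "m \<le> n \<Longrightarrow> \<exists>p q. realizable p q \<and> (\<forall>k<m. Im (q k) = 0)" for m
  proof (induction m)
    case 0
    then show ?case using realizable_std by blast
  next
    case (Suc m)
    then obtain p q where "realizable p q" "\<forall>k<m. Im (q k) = 0" by auto
    then have "\<exists>p q. realizable p q \<and> (\<forall>k<m. Im (q k) = 0) \<and> Im (q m) = 0"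
      using Suc.prems
      by (intro realizable_reduce_y[where R = "\<lambda>p q. \<forall>k<m. Im (q k) = 0" and \<phi> = Im]) auto
    then obtain p' q' where "realizable p' q'" "\<forall>k<m. Im (q' k) = 0" "Im (q' m) = 0"
      by blast
    then show ?case using less_Suc_eq by blast
  qed
  then show ?thesis by blast
qed

lemma exists_realizable_real_except_x0:
  "\<exists>p q. realizable p q \<and> (\<forall>k<n. Im (q k) = 0) \<and> (\<forall>k\<in>{1..<n}. Im (p k) = 0)"
proof -
  have "m \<le> n \<Longrightarrow>
      \<exists>p q. realizable p q \<and> (\<forall>k<n. Im (q k) = 0) \<and> (\<forall>k\<in>{1..<m}. Im (p k) = 0)" for m
  proof (induction m)
    case 0
    then show ?case using exists_realizable_real_y by simp
  next
    case (Suc m)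
    then obtain p q where pq: "realizable p q" "\<forall>k<n. Im (q k) = 0" "\<forall>k\<in>{1..<m}. Im (p k) = 0"
      by auto
    show ?case
    proof (cases "m = 0")
      case True
      then show ?thesis using pq by auto
    next
      case False
      with pq Suc.prems have "\<exists>p q. realizable p q
          \<and> ((\<forall>k<n. Im (q k) = 0) \<and> (\<forall>k\<in>{1..<m}. Im (p k) = 0)) \<and> Im (p m) = 0"
        by (intro realizable_reduce_x[where i = 0 and R = "\<lambda>p q. (\<forall>k<n. Im (q k) = 0)
            \<and> (\<forall>k\<in>{1..<m}. Im (p k) = 0)" and \<phi> = Im]) auto
      then obtain p' q' where pq': "realizable p' q'" "\<forall>k<n. Im (q' k) = 0"
          "\<forall>k\<in>{1..<m}. Im (p' k) = 0" "Im (p' m) = 0"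
        by blast
      then have "\<forall>k\<in>{1..<Suc m}. Im (p' k) = 0" by (auto simp: less_Suc_eq)
      with pq' show ?thesis by blast
    qed
  qed
  then show ?thesis by blast
qed

definition Im_normal :: "(nat \<Rightarrow> complex) \<Rightarrow> (nat \<Rightarrow> complex) \<Rightarrow> bool" where
  "Im_normal p q \<longleftrightarrow> Im (p 0) = 0 \<and> Im (q 0) = 1 \<and> (\<forall>k\<in>{1..<n}. Im (p k) = 0 \<and> Im (q k) = 0)"

lemma exists_realizable_Im_normal: "\<exists>p q. realizable p q \<and> Im_normal p q"
proof -
  obtain p q where pq: "realizable p q" "\<forall>k<n. Im (q k) = 0" "\<forall>k\<in>{1..<n}. Im (p k) = 0"
    using exists_realizable_real_except_x0 by blast
  obtain a b where "\<i> = (\<Sum>j<n. of_int (a j) * p j + of_int (b j) * q j)"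
    using realizable_represents[OF pq(1) Gaussian_integer_in_image[of \<i>]] by auto
  then have "1 = Im (\<Sum>j<n. of_int (a j) * p j + of_int (b j) * q j)"
    using arg_cong[of _ _ Im] by simp
  also have "\<dots> = (\<Sum>j<n. if j = 0 then of_int (a 0) * Im (p 0) else 0)"
    unfolding Im_sum by (rule sum.cong) (use pq(2,3) in auto)
  finally have "0 < n" and unit: "of_int (a 0) * Im (p 0) = 1"
    by (simp_all split: if_splits)
  obtain g where g: "Im (p 0) = of_int g"
    using realizable_Gaussian_integer(2)[OF pq(1) \<open>0 < n\<close>] by (auto elim!: Ints_cases)
  have "g * g = 1"
    using unit unfolding g by (metis of_int_eq_1_iff of_int_mult zmult_eq_1_iff)
  define q' where "q' = q(0 := q 0 + of_int g * p 0)"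
  define p' where "p' = p(0 := p 0 + of_int (- g) * q' 0)"
  have "realizable p' q'"
    unfolding p'_def q'_def
    by (intro realizable_add_y_to_x realizable_add_x_to_y pq(1) \<open>0 < n\<close>)
  moreover have "Im (q' 0) = 1"
    using pq(2) \<open>0 < n\<close> \<open>g * g = 1\<close> by (simp add: q'_def g flip: of_int_mult)
  moreover have "Im (p' 0) = 0"
    using \<open>Im (q' 0) = 1\<close> by (simp add: p'_def g)
  ultimately show ?thesis
    using pq(2,3) unfolding Im_normal_def by (intro exI[of _ p'] exI[of _ q']) (auto simp: p'_def q'_def)
qed

lemma exists_realizable_y_vanishing:
  "\<exists>p q. realizable p q \<and> Im_normal p q \<and> (\<forall>k\<in>{1..<n}. q k = 0)"
proof -
  have "m \<le> n \<Longrightarrow> \<exists>p q. realizable p q \<and> Im_normal p q \<and> (\<forall>k\<in>{1..<m}. q k = 0)" for m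
  proof (induction m)
    case 0
    then show ?case using exists_realizable_Im_normal by simp
  next
    case (Suc m)
    then obtain p q where pq: "realizable p q" "Im_normal p q" "\<forall>k\<in>{1..<m}. q k = 0"
      by auto
    show ?case
    proof (cases "m = 0")
      case True
      then show ?thesis using pq by auto
    next
      case False
      with pq Suc.prems have "\<exists>p q. realizable p q
          \<and> (Im_normal p q \<and> (\<forall>k\<in>{1..<m}. q k = 0)) \<and> Re (q m) = 0"
        by (intro realizable_reduce_y[where R = "\<lambda>p q. Im_normal p q \<and> (\<forall>k\<in>{1..<m}. q k = 0)"
            and \<phi> = Re]) (auto simp: Im_normal_def)
      then obtain p' q' where pq': "realizable p' q'" "Im_normal p' q'"
          "\<forall>k\<in>{1..<m}. q' k = 0" "Re (q' m) = 0"
        by blast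
      then have "\<forall>k\<in>{1..<Suc m}. q' k = 0"
        using False Suc.prems by (auto simp: less_Suc_eq Im_normal_def complex_eq_iff)
      with pq' show ?thesis by blast
    qed
  qed
  then show ?thesis by blast
qed

lemma exists_realizable_x_vanishing:
  "\<exists>p q. realizable p q \<and> Im_normal p q \<and> (\<forall>k\<in>{1..<n}. q k = 0) \<and> (\<forall>k\<in>{2..<n}. p k = 0)"
proof -
  have "m \<le> n \<Longrightarrow> \<exists>p q. realizable p q \<and> Im_normal p q \<and> (\<forall>k\<in>{1..<n}. q k = 0)
          \<and> (\<forall>k\<in>{2..<m}. p k = 0)" for m
  proof (induction m)
    case 0
    then show ?case using exists_realizable_y_vanishing by simp
  next
    case (Suc m)
    then obtain p q where pq: "realizable p q" "Im_normal p q" "\<forall>k\<in>{1..<n}. q k = 0"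
      "\<forall>k\<in>{2..<m}. p k = 0"
      by auto
    show ?case
    proof (cases "m < 2")
      case True
      then show ?thesis using pq by auto
    next
      case False
      with pq Suc.prems have "\<exists>p q. realizable p q
          \<and> (Im_normal p q \<and> (\<forall>k\<in>{1..<n}. q k = 0) \<and> (\<forall>k\<in>{2..<m}. p k = 0)) \<and> Re (p m) = 0"
        by (intro realizable_reduce_x[where i = 1 and R = "\<lambda>p q. Im_normal p q
            \<and> (\<forall>k\<in>{1..<n}. q k = 0) \<and> (\<forall>k\<in>{2..<m}. p k = 0)" and \<phi> = Re])
          (auto simp: Im_normal_def)
      then obtain p' q' where pq': "realizable p' q'" "Im_normal p' q'"
          "\<forall>k\<in>{1..<n}. q' k = 0" "\<forall>k\<in>{2..<m}. p' k = 0" "Re (p' m) = 0"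
        by blast
      then have "\<forall>k\<in>{2..<Suc m}. p' k = 0"
        using False Suc.prems by (auto simp: less_Suc_eq Im_normal_def complex_eq_iff)
      with pq' show ?thesis by blast
    qed
  qed
  then show ?thesis by blast
qed

lemma realizable_Im_normal_values:
  assumes "realizable p q" "Im_normal p q" "1 < n"
  shows "\<exists>W d t. p 0 = of_int W \<and> p 1 = of_int d \<and> q 0 = of_int t + \<i>"
proof -
  note ints = realizable_Gaussian_integer[OF assms(1)]
  have "0 < n" "Im (p 1) = 0"
    using assms(2,3) unfolding Im_normal_def by simp_all
  obtain W where "p 0 = of_int W"
    using Gaussian_integer_real_eq_of_int[OF ints(1)[OF \<open>0 < n\<close>]] assms(2)
    unfolding Im_normal_def by blast
  moreover obtain d where "p 1 = of_int d"
    using Gaussian_integer_real_eq_of_int[OF ints(1)[OF assms(3)] \<open>Im (p 1) = 0\<close>] by blast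
  moreover obtain t where "q 0 - \<i> = of_int t"
    using Gaussian_integer_real_eq_of_int[of "q 0 - \<i>"] ints(3)[OF \<open>0 < n\<close>] assms(2)
    unfolding Im_normal_def by auto
  ultimately show ?thesis by (auto simp: diff_eq_eq)
qed

lemma realizable_bezout:
  assumes "realizable p q" "2 \<le> n" "p 0 = of_int W" "p 1 = of_int d" "Im (q 0) = 1" "q 1 = 0"
    and "\<forall>k\<in>{2..<n}. p k = 0 \<and> q k = 0"
  shows "\<exists>a\<^sub>0 a\<^sub>1. a\<^sub>0 * W + a\<^sub>1 * d = 1"
proof -
  obtain a b where "1 = (\<Sum>j<n. of_int (a j) * p j + of_int (b j) * q j)"
    using realizable_represents[OF assms(1) Gaussian_integer_in_image[of 1]] by auto
  also have "\<dots> = of_int (a 0 * W + a 1 * d) + of_int (b 0) * q 0"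
    using sum_lessThan_two[OF assms(2), of "\<lambda>j. of_int (a j) * p j + of_int (b j) * q j"]
      assms(3,4,6,7) by (simp add: algebra_simps)
  finally have one: "1 = of_int (a 0 * W + a 1 * d) + of_int (b 0) * q 0" .
  from arg_cong[OF one, of Im] have "b 0 = 0" using assms(5) by simp
  with arg_cong[OF one, of Re] have "real_of_int (a 0 * W + a 1 * d) = 1" by simp
  then show ?thesis by (metis of_int_eq_1_iff)
qed

lemma exists_realizable_y0_eq_i:
  assumes "2 \<le> n"
  shows "\<exists>p q. realizable p q \<and> Im (p 0) = 0 \<and> q 0 = \<i> \<and> Im (p 1) = 0 \<and> Im (q 1) = 0
           \<and> (\<forall>k\<in>{2..<n}. p k = 0 \<and> q k = 0)"
proof -
  obtain p q where pq: "realizable p q" "Im_normal p q" "\<forall>k\<in>{1..<n}. q k = 0" "\<forall>k\<in>{2..<n}. p k = 0"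
    using exists_realizable_x_vanishing by blast
  have n: "0 < n" "1 < n" using assms by auto
  obtain W d t where W: "p 0 = of_int W" and d: "p 1 = of_int d" and t: "q 0 = of_int t + \<i>"
    using realizable_Im_normal_values[OF pq(1,2) n(2)] by blast
  have q1: "q 1 = 0" using pq(3) n(2) by simp
  obtain a\<^sub>0 a\<^sub>1 where bezout: "a\<^sub>0 * W + a\<^sub>1 * d = 1"
    using realizable_bezout[OF pq(1) assms W d _ q1] pq(2,3,4) unfolding Im_normal_def by auto
  txt \<open>The transvection along \<open>x\<^sub>0 + x\<^sub>1\<close> and a shift of \<open>y\<^sub>0\<close> by \<open>x\<^sub>0\<close> change \<open>Re q\<^sub>0\<close> by
    \<open>-t (a\<^sub>0 W + a\<^sub>1 d) = -t\<close>.\<close>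
  define c where "c = t * a\<^sub>1"
  define q' where "q' = (\<lambda>k. q k - of_int (c * (if k = 0 \<or> k = 1 then 1 else 0)) * (p 0 + p 1))"
  have "realizable p q'"
    using realizable_transvection[OF pq(1), where a = "\<lambda>k. if k = 0 \<or> k = 1 then 1 else 0"
        and b = "\<lambda>_. 0" and c = c]
      sum_lessThan_two[OF assms, of "\<lambda>j. of_int (if j = 0 \<or> j = 1 then 1 else 0) * p j"]
    by (simp add: q'_def)
  moreover have "q' 0 + of_int (c - t * a\<^sub>0) * p 0 = \<i>"
  proof -
    have "q' 0 + of_int (c - t * a\<^sub>0) * p 0 = of_int (t * (1 - (a\<^sub>0 * W + a\<^sub>1 * d))) + \<i>"
      using W d t by (simp add: q'_def c_def algebra_simps)
    then show ?thesis unfolding bezout by simp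
  qed
  ultimately have realizable': "realizable p (q'(0 := \<i>))"
    using realizable_add_x_to_y[OF _ n(1), of p q' "c - t * a\<^sub>0"] by simp
  have q': "Im (q' 1) = 0" "\<forall>k\<in>{2..<n}. q' k = 0"
    using q1 W d pq(3) by (simp_all add: q'_def)
  show ?thesis
    by (rule exI[where x = p], rule exI[where x = "q'(0 := \<i>)"])
      (use realizable' q' pq(2,4) n in \<open>auto simp: Im_normal_def\<close>)
qed

lemma omega_normal_form:
  assumes "realizable p q" "0 < n" "q 0 = \<i>" "\<forall>k\<in>{1..<n}. q k = 0"
  shows "omega n chi = Re (p 0)"
proof -
  have "omega n chi = (\<Sum>j<n. Im (cnj (p j) * q j))"
    using assms(1) by (simp add: realizable_def)
  also have "\<dots> = (\<Sum>j<n. if j = 0 then Re (p 0) else 0)"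
    by (rule sum.cong) (use assms(3,4) in auto)
  finally show ?thesis using assms(2) by simp
qed

lemma realizable_reduce_mod:
  assumes "realizable p q" "i < n" "k < n" "i \<noteq> k" "p i = of_int W" "p k = of_int d" "q k = 0"
  shows "realizable (p(k := of_int (d mod W))) q"
proof -
  have "realizable (p(k := p k + of_int (- (d div W)) * p i)) q"
    using realizable_shear[OF assms(1,3,2) assms(4)[symmetric], of "- (d div W)"] assms(7) by simp
  moreover have "p k + of_int (- (d div W)) * p i = of_int (d + - (d div W) * W)"
    using assms(5,6) by simp
  ultimately show ?thesis by (simp add: minus_div_mult_eq_mod[symmetric])
qed

lemma exists_realizable_normal_form:
  assumes "2 \<le> n" "0 < omega n chi"
  shows "\<exists>p q. realizable p q \<and> p 0 = of_real (omega n chi) \<and> q 0 = \<i> \<and>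
           (\<forall>j\<in>{1..<n}. q j = 0 \<and>
              (\<exists>a :: int. p j = of_int a \<and> 0 \<le> a \<and> real_of_int a < omega n chi))"
proof -
  have n: "0 < n" "1 < n" using assms by auto
  define R where "R p q \<longleftrightarrow> Im (p 0) = 0 \<and> q 0 = \<i> \<and> Im (p 1) = 0 \<and> Im (q 1) = 0
           \<and> (\<forall>k\<in>{2..<n}. p k = 0 \<and> q k = 0)" for p q
  obtain p0 q0 where "realizable p0 q0" "R p0 q0"
    using exists_realizable_y0_eq_i[OF assms(1)] unfolding R_def by blast
  then have "\<exists>p q. realizable p q \<and> R p q \<and> Re (q 1) = 0"
    using n by (intro realizable_reduce_y[where \<phi> = Re]) (auto simp: R_def)
  then obtain p q where pq: "realizable p q" "R p q" "Re (q 1) = 0" by blast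
  then have q: "\<forall>k\<in>{1..<n}. q k = 0"
    unfolding R_def by (metis atLeastLessThan_iff complex_eq_iff le_eq_less_or_eq
        zero_complex.sel Suc_1 Suc_leI)
  have omega: "omega n chi = Re (p 0)"
    using omega_normal_form[OF pq(1) n(1)] pq(2) q unfolding R_def by blast
  note ints = realizable_Gaussian_integer[OF pq(1)]
  obtain W where W: "p 0 = of_int W"
    using Gaussian_integer_real_eq_of_int[OF ints(1)[OF n(1)]] pq(2) unfolding R_def by blast
  obtain d where d: "p 1 = of_int d"
    using Gaussian_integer_real_eq_of_int[OF ints(1)[OF n(2)]] pq(2) unfolding R_def by blast
  have "W > 0" using assms(2) omega W by simp
  have realizable': "realizable (p(1 := of_int (d mod W))) q"
    using realizable_reduce_mod[OF pq(1) n(1,2) _ W d] q n(2) by simp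
  have "0 \<le> d mod W" "real_of_int (d mod W) < omega n chi"
    using \<open>W > 0\<close> by (simp_all add: omega W)
  then have rest: "\<forall>j\<in>{1..<n}. q j = 0 \<and> (\<exists>a :: int. (p(1 := of_int (d mod W))) j = of_int a
               \<and> 0 \<le> a \<and> real_of_int a < omega n chi)"
    using q pq(2) assms(2) unfolding R_def
    by (metis atLeastLessThan_iff fun_upd_apply le_eq_less_or_eq of_int_0 order_refl Suc_1 Suc_leI)
  show ?thesis
    by (rule exI[of _ "p(1 := of_int (d mod W))"], rule exI[of _ q])
      (use realizable' rest pq(2) omega W in \<open>auto simp: R_def complex_eq_iff\<close>)
qed

end

theorem mainTheorem14:
  fixes n :: nat and chi :: "(nat \<Rightarrow> int) \<Rightarrow> complex"
  assumes "n \<ge> 2"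
    and "is_char n chi"
    and "chi ` H1 n = {of_int a + \<i> * of_int b | a b :: int. True}"
    and "omega n chi > 0"
  shows "\<exists>x y. symplectic_basis n x y \<and>
           chi (x 0) = of_real (omega n chi) \<and> chi (y 0) = \<i> \<and>
           (\<forall>j\<in>{1..<n}. chi (y j) = 0 \<and>
              (\<exists>a :: int. chi (x j) = of_int a \<and> 0 \<le> a \<and> real_of_int a < omega n chi))"
proof -
  interpret integral_character n chi
    using assms(2,3) by unfold_locales
  obtain p q where "realizable p q" and pq: "p 0 = of_real (omega n chi)" "q 0 = \<i>"
    "\<forall>j\<in>{1..<n}. q j = 0 \<and> (\<exists>a :: int. p j = of_int a \<and> 0 \<le> a \<and> real_of_int a < omega n chi)"
    using exists_realizable_normal_form[OF assms(1,4)] by blast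
  then obtain x y where xy: "symplectic_basis n x y" "\<forall>j<n. chi (x j) = p j \<and> chi (y j) = q j"
    unfolding realizable_def by blast
  show ?thesis
  proof (intro exI conjI)
    show "symplectic_basis n x y" by (fact xy(1))
    show "chi (x 0) = of_real (omega n chi)" "chi (y 0) = \<i>"
      using xy(2) pq(1,2) assms(1) by auto
    show "\<forall>j\<in>{1..<n}. chi (y j) = 0 \<and>
        (\<exists>a :: int. chi (x j) = of_int a \<and> 0 \<le> a \<and> real_of_int a < omega n chi)"
      using xy(2) pq(3) by auto
  qed
qed

end
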